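(* Let $R$ be a commutative ring and $S$ a multiplicative subset of $R$. If $R$ is a $u$-$S$-coherent ring with respect to some $s\in S$, then the localization $R_s$ is a coherent ring.
   Context: A multiplicative subset $S$ contains $1$ and is closed under products. For $s\in S$, $R_s$ is the localization of $R$ at $\{1,s,s^2,\dots\}$. $M$ is $S$-finite with respect to $s$ if there is a finitely generated submodule $F\subseteq M$ with $sM\subseteq F$. $M$ is $u$-$S$-finitely presented with respect to $s$ if there is an exact sequence $0\to T_1\to F\to M\to T_2\to 0$ with $F$ finitely presented and $sT_1=sT_2=0$. $R$ is $u$-$S$-coherent with respect to $s$ if $R$ is $S$-finite with respect to $s$ and every finitely generated ideal of $R$ is $u$-$S$-finitely presented with respect to $s$. *)

theory Defs
  imports "HOL-Algebra.Algebra"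
begin

definition mult_subset :: "('a, 'b) ring_scheme \<Rightarrow> 'a set \<Rightarrow> bool" where
  "mult_subset R S \<longleftrightarrow> S \<subseteq> carrier R \<and> \<one>\<^bsub>R\<^esub> \<in> S \<and>
     (\<forall>x\<in>S. \<forall>y\<in>S. x \<otimes>\<^bsub>R\<^esub> y \<in> S)"

text \<open>The free module R^n: vectors indexed by {..<n}, zero outside.\<close>
definition rvec :: "('a, 'b) ring_scheme \<Rightarrow> nat \<Rightarrow> (nat \<Rightarrow> 'a) set" where
  "rvec R n = {v. (\<forall>i<n. v i \<in> carrier R) \<and> (\<forall>i\<ge>n. v i = \<zero>\<^bsub>R\<^esub>)}"

definition lincomb :: "('a, 'b) ring_scheme \<Rightarrow> nat \<Rightarrow> (nat \<Rightarrow> 'a) \<Rightarrow> (nat \<Rightarrow> 'a) \<Rightarrow> 'a" where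
  "lincomb R n v a = (\<Oplus>\<^bsub>R\<^esub>i\<in>{..<n}. v i \<otimes>\<^bsub>R\<^esub> a i)"

definition vspan :: "('a, 'b) ring_scheme \<Rightarrow> nat \<Rightarrow> nat \<Rightarrow> (nat \<Rightarrow> nat \<Rightarrow> 'a) \<Rightarrow> (nat \<Rightarrow> 'a) set" where
  "vspan R n m w = {(\<lambda>i. if i < n then (\<Oplus>\<^bsub>R\<^esub>j\<in>{..<m}. c j \<otimes>\<^bsub>R\<^esub> w j i) else \<zero>\<^bsub>R\<^esub>)
                     | c. \<forall>j<m. c j \<in> carrier R}"

definition fin_gen_ideal :: "('a, 'b) ring_scheme \<Rightarrow> 'a set \<Rightarrow> bool" where
  "fin_gen_ideal R I \<longleftrightarrow> (\<exists>A. finite A \<and> A \<subseteq> carrier R \<and> I = Idl\<^bsub>R\<^esub> A)"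

definition fin_pres_ideal :: "('a, 'b) ring_scheme \<Rightarrow> 'a set \<Rightarrow> bool" where
  "fin_pres_ideal R I \<longleftrightarrow>
    (\<exists>n a. (\<forall>i<n. a i \<in> carrier R) \<and> I = {lincomb R n v a | v. v \<in> rvec R n} \<and>
       (\<exists>m w. (\<forall>j<m. w j \<in> rvec R n) \<and>
              {v \<in> rvec R n. lincomb R n v a = \<zero>\<^bsub>R\<^esub>} = vspan R n m w))"

definition coherent_ring :: "('a, 'b) ring_scheme \<Rightarrow> bool" where
  "coherent_ring R \<longleftrightarrow> (\<forall>I. ideal I R \<and> fin_gen_ideal R I \<longrightarrow> fin_pres_ideal R I)"

definition S_finite_ring_wrt :: "('a, 'b) ring_scheme \<Rightarrow> 'a \<Rightarrow> bool" where
  "S_finite_ring_wrt R s \<longleftrightarrow>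
    (\<exists>A. finite A \<and> A \<subseteq> carrier R \<and> (\<forall>r\<in>carrier R. s \<otimes>\<^bsub>R\<^esub> r \<in> Idl\<^bsub>R\<^esub> A))"

text \<open>An ideal I is u-S-finitely presented w.r.t. s: there is a finitely presented module
  F = R^n / K (K = span of w 0..w (m-1)) and an R-linear f : F \<rightarrow> I (induced by
  e_i \<mapsto> a i, vanishing on K) with s \<cdot> ker f = 0 and s \<cdot> coker f = 0, i.e. an exact
  sequence 0 \<rightarrow> T1 \<rightarrow> F \<rightarrow> I \<rightarrow> T2 \<rightarrow> 0 with T1 = ker f, T2 = coker f.\<close>
definition u_S_fin_pres_ideal_wrt :: "('a, 'b) ring_scheme \<Rightarrow> 'a \<Rightarrow> 'a set \<Rightarrow> bool" where
  "u_S_fin_pres_ideal_wrt R s I \<longleftrightarrow>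
    (\<exists>n a m w. (\<forall>i<n. a i \<in> I) \<and> (\<forall>j<m. w j \<in> rvec R n) \<and>
       (\<forall>v\<in>vspan R n m w. lincomb R n v a = \<zero>\<^bsub>R\<^esub>) \<and>
       (\<forall>v\<in>rvec R n. lincomb R n v a = \<zero>\<^bsub>R\<^esub> \<longrightarrow> (\<lambda>i. s \<otimes>\<^bsub>R\<^esub> v i) \<in> vspan R n m w) \<and>
       (\<forall>x\<in>I. s \<otimes>\<^bsub>R\<^esub> x \<in> {lincomb R n v a | v. v \<in> rvec R n}))"

definition u_S_coherent_wrt :: "('a, 'b) ring_scheme \<Rightarrow> 'a \<Rightarrow> bool" where
  "u_S_coherent_wrt R s \<longleftrightarrow> S_finite_ring_wrt R s \<and>
     (\<forall>I. ideal I R \<and> fin_gen_ideal R I \<longrightarrow> u_S_fin_pres_ideal_wrt R s I)"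

text \<open>Localization R_s = R[1/s]: fractions a / s^m, (a,m) ~ (b,n) iff
  s^k (a s^n - b s^m) = 0 for some k.\<close>
definition loc_rel :: "('a, 'b) ring_scheme \<Rightarrow> 'a \<Rightarrow> ('a \<times> nat) \<Rightarrow> ('a \<times> nat) \<Rightarrow> bool" where
  "loc_rel R s p q \<longleftrightarrow> (\<exists>k::nat. s [^]\<^bsub>R\<^esub> k \<otimes>\<^bsub>R\<^esub>
      (fst p \<otimes>\<^bsub>R\<^esub> s [^]\<^bsub>R\<^esub> snd q \<ominus>\<^bsub>R\<^esub> fst q \<otimes>\<^bsub>R\<^esub> s [^]\<^bsub>R\<^esub> snd p) = \<zero>\<^bsub>R\<^esub>)"

definition loc_class :: "('a, 'b) ring_scheme \<Rightarrow> 'a \<Rightarrow> 'a \<Rightarrow> nat \<Rightarrow> ('a \<times> nat) set" where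
  "loc_class R s a m = {q \<in> carrier R \<times> UNIV. loc_rel R s (a, m) q}"

definition loc_mult :: "('a, 'b) ring_scheme \<Rightarrow> 'a \<Rightarrow> ('a \<times> nat) set \<Rightarrow> ('a \<times> nat) set \<Rightarrow> ('a \<times> nat) set" where
  "loc_mult R s U V = {x. \<exists>p\<in>U. \<exists>q\<in>V. x \<in> loc_class R s (fst p \<otimes>\<^bsub>R\<^esub> fst q) (snd p + snd q)}"

definition loc_add :: "('a, 'b) ring_scheme \<Rightarrow> 'a \<Rightarrow> ('a \<times> nat) set \<Rightarrow> ('a \<times> nat) set \<Rightarrow> ('a \<times> nat) set" where
  "loc_add R s U V = {x. \<exists>p\<in>U. \<exists>q\<in>V.
     x \<in> loc_class R s (fst p \<otimes>\<^bsub>R\<^esub> s [^]\<^bsub>R\<^esub> snd q \<oplus>\<^bsub>R\<^esub> fst q \<otimes>\<^bsub>R\<^esub> s [^]\<^bsub>R\<^esub> snd p)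
                   (snd p + snd q)}"

definition loc_carrier :: "('a, 'b) ring_scheme \<Rightarrow> 'a \<Rightarrow> ('a \<times> nat) set set" where
  "loc_carrier R s = {loc_class R s a m | a m. a \<in> carrier R}"

definition localization :: "('a, 'b) ring_scheme \<Rightarrow> 'a \<Rightarrow> ('a \<times> nat) set ring" where
  "localization R s =
    \<lparr> carrier = loc_carrier R s,
      Group.monoid.mult = loc_mult R s,
      Group.monoid.one = loc_class R s \<one>\<^bsub>R\<^esub> 0,
      Ring.ring.zero = loc_class R s \<zero>\<^bsub>R\<^esub> 0,
      Ring.ring.add = loc_add R s \<rparr>"

end

(* Inverting s turns the u-S-finite presentation of an ideal of R into an honest finite
   presentation over R_s. Every element of R_s is a/s^k, so a finitely generated ideal J of R_s
   is generated by the images of finitely many a \<in> R; let I be the ideal of R they generate.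
   Take the data b, w of a u-S-finite presentation of I. Since s \<cdot> I lies in the span of the
   b_i and s is a unit in R_s, the images of the b_i generate J. A syzygy of these images
   over R_s is, after clearing denominators, s^K-fold the image of a vector u over R with
   s^t \<cdot> u a syzygy of the b_i; then s^(t+1) \<cdot> u lies in the span of the w_j, and
   dividing by s^(t+1+K) shows that the images of the w_j span all syzygies. *)

theory Submission
  imports Defs
begin

section \<open>Linear combinations and syzygies over a ring\<close>

definition lincomb_range :: "('a, 'b) ring_scheme \<Rightarrow> nat \<Rightarrow> (nat \<Rightarrow> 'a) \<Rightarrow> 'a set" where
  "lincomb_range R n a = {lincomb R n v a | v. v \<in> rvec R n}"

definition syzygies :: "('a, 'b) ring_scheme \<Rightarrow> nat \<Rightarrow> (nat \<Rightarrow> 'a) \<Rightarrow> (nat \<Rightarrow> 'a) set" where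
  "syzygies R n a = {v \<in> rvec R n. lincomb R n v a = \<zero>\<^bsub>R\<^esub>}"

context ring
begin

lemma rvec_carrier: "v \<in> rvec R n \<Longrightarrow> i < n \<Longrightarrow> v i \<in> carrier R"
  by (simp add: rvec_def)

lemma rvec_outside: "v \<in> rvec R n \<Longrightarrow> \<not> i < n \<Longrightarrow> v i = \<zero>"
  by (simp add: rvec_def)

lemma zero_rvec: "(\<lambda>i. \<zero>) \<in> rvec R n"
  by (simp add: rvec_def)

lemma rvec_smult: "c \<in> carrier R \<Longrightarrow> v \<in> rvec R n \<Longrightarrow> (\<lambda>i. c \<otimes> v i) \<in> rvec R n"
  by (simp add: rvec_def)

lemma rvec_add: "v \<in> rvec R n \<Longrightarrow> v' \<in> rvec R n \<Longrightarrow> (\<lambda>i. v i \<oplus> v' i) \<in> rvec R n"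
  by (simp add: rvec_def)

lemma finsum_lessThan_Suc:
  "f \<in> {..<Suc n} \<rightarrow> carrier R \<Longrightarrow> (\<Oplus>i\<in>{..<Suc n}. f i) = f n \<oplus> (\<Oplus>i\<in>{..<n}. f i)"
  by (simp add: lessThan_Suc Pi_def)

lemma finsum_in_ideal:
  fixes n :: nat
  assumes "ideal J R" "\<And>i. i < n \<Longrightarrow> f i \<in> J"
  shows "(\<Oplus>i\<in>{..<n}. f i) \<in> J"
  using assms(2)
proof (induction n)
  case 0
  then show ?case using assms(1) by (simp add: additive_subgroup.zero_closed ideal.axioms(1))
next
  case (Suc n)
  have f: "f \<in> {..<Suc n} \<rightarrow> carrier R" using Suc.prems ideal.Icarr[OF assms(1)] by auto
  show ?case unfolding finsum_lessThan_Suc[OF f]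
    using Suc by (intro additive_subgroup.a_closed[OF ideal.axioms(1)[OF assms(1)]]) auto
qed

lemma finsum_lessThan_swap:
  fixes n m :: nat
  assumes "\<And>i j. i < n \<Longrightarrow> j < m \<Longrightarrow> f i j \<in> carrier R"
  shows "(\<Oplus>i\<in>{..<n}. \<Oplus>j\<in>{..<m}. f i j) = (\<Oplus>j\<in>{..<m}. \<Oplus>i\<in>{..<n}. f i j)"
  using assms
proof (induction n)
  case 0
  then show ?case by (simp add: finsum_zero)
next
  case (Suc n)
  have "(\<Oplus>i\<in>{..<Suc n}. \<Oplus>j\<in>{..<m}. f i j) = (\<Oplus>j\<in>{..<m}. f n j) \<oplus> (\<Oplus>j\<in>{..<m}. \<Oplus>i\<in>{..<n}. f i j)"
    using Suc by (simp add: finsum_lessThan_Suc)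
  also have "\<dots> = (\<Oplus>j\<in>{..<m}. f n j \<oplus> (\<Oplus>i\<in>{..<n}. f i j))"
    using Suc.prems by (intro finsum_addf[symmetric]) auto
  also have "\<dots> = (\<Oplus>j\<in>{..<m}. \<Oplus>i\<in>{..<Suc n}. f i j)"
    using Suc.prems by (intro finsum_cong') (auto simp: finsum_lessThan_Suc)
  finally show ?case .
qed

lemma lincomb_closed:
  "(\<And>i. i < n \<Longrightarrow> v i \<in> carrier R) \<Longrightarrow> (\<And>i. i < n \<Longrightarrow> a i \<in> carrier R) \<Longrightarrow>
    lincomb R n v a \<in> carrier R"
  unfolding lincomb_def by (intro finsum_closed) auto

lemma lincomb_smult:
  assumes "c \<in> carrier R" "\<And>i. i < n \<Longrightarrow> v i \<in> carrier R" "\<And>i. i < n \<Longrightarrow> a i \<in> carrier R"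
  shows "c \<otimes> lincomb R n v a = lincomb R n (\<lambda>i. c \<otimes> v i) a"
  unfolding lincomb_def using assms
  by (subst finsum_rdistr) (auto intro!: finsum_cong' simp: m_assoc)

lemma lincomb_add:
  assumes "\<And>i. i < n \<Longrightarrow> v i \<in> carrier R" "\<And>i. i < n \<Longrightarrow> v' i \<in> carrier R"
    "\<And>i. i < n \<Longrightarrow> a i \<in> carrier R"
  shows "lincomb R n v a \<oplus> lincomb R n v' a = lincomb R n (\<lambda>i. v i \<oplus> v' i) a"
proof -
  have "lincomb R n (\<lambda>i. v i \<oplus> v' i) a = (\<Oplus>i\<in>{..<n}. v i \<otimes> a i \<oplus> v' i \<otimes> a i)"
    unfolding lincomb_def using assms by (intro finsum_cong') (auto simp: l_distr)
  also have "\<dots> = lincomb R n v a \<oplus> lincomb R n v' a"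
    unfolding lincomb_def using assms by (intro finsum_addf) auto
  finally show ?thesis by simp
qed

lemma lincomb_vspan_elem:
  fixes m :: nat
  assumes "\<And>j. j < m \<Longrightarrow> c j \<in> carrier R" "\<And>j. j < m \<Longrightarrow> w j \<in> rvec R n"
    "\<And>i. i < n \<Longrightarrow> a i \<in> carrier R"
  shows "lincomb R n (\<lambda>i. if i < n then (\<Oplus>j\<in>{..<m}. c j \<otimes> w j i) else \<zero>) a
       = (\<Oplus>j\<in>{..<m}. c j \<otimes> lincomb R n (w j) a)"
proof -
  have w: "\<And>i j. i < n \<Longrightarrow> j < m \<Longrightarrow> w j i \<in> carrier R" using assms(2) rvec_carrier by blast
  have "(\<Oplus>j\<in>{..<m}. c j \<otimes> w j i) \<otimes> a i = (\<Oplus>j\<in>{..<m}. c j \<otimes> (w j i \<otimes> a i))"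
    if "i < n" for i
    using assms(1,3) w that by (subst finsum_ldistr) (auto intro!: finsum_cong' simp: m_assoc)
  then have "lincomb R n (\<lambda>i. if i < n then (\<Oplus>j\<in>{..<m}. c j \<otimes> w j i) else \<zero>) a
      = (\<Oplus>i\<in>{..<n}. \<Oplus>j\<in>{..<m}. c j \<otimes> (w j i \<otimes> a i))"
    unfolding lincomb_def using assms(1,3) w by (intro finsum_cong') auto
  also have "\<dots> = (\<Oplus>j\<in>{..<m}. \<Oplus>i\<in>{..<n}. c j \<otimes> (w j i \<otimes> a i))"
    using assms(1,3) w by (intro finsum_lessThan_swap) auto
  also have "\<dots> = (\<Oplus>j\<in>{..<m}. c j \<otimes> lincomb R n (w j) a)"
    unfolding lincomb_def using assms(1,3) w by (intro finsum_cong') (auto simp: finsum_rdistr)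
  finally show ?thesis .
qed

lemma vspan_memI:
  "(\<And>j. j < m \<Longrightarrow> c j \<in> carrier R) \<Longrightarrow>
    (\<lambda>i. if i < n then (\<Oplus>j\<in>{..<m}. c j \<otimes> w j i) else \<zero>) \<in> vspan R n m w"
  by (auto simp: vspan_def)

lemma vspan_memE:
  assumes "v \<in> vspan R n m w"
  obtains c where "\<And>j. j < m \<Longrightarrow> c j \<in> carrier R"
    "v = (\<lambda>i. if i < n then (\<Oplus>j\<in>{..<m}. c j \<otimes> w j i) else \<zero>)"
  using assms unfolding vspan_def by blast

lemma vspan_subset_rvec:
  assumes "\<And>j. j < m \<Longrightarrow> w j \<in> rvec R n"
  shows "vspan R n m w \<subseteq> rvec R n"
  using assms by (auto simp: vspan_def rvec_def intro!: finsum_closed)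

lemma vspan_generator:
  fixes m :: nat
  assumes "\<And>j. j < m \<Longrightarrow> w j \<in> rvec R n" "j < m"
  shows "w j \<in> vspan R n m w"
proof -
  have wc: "\<And>i j. i < n \<Longrightarrow> j < m \<Longrightarrow> w j i \<in> carrier R" using assms(1) rvec_carrier by blast
  define \<delta> where "\<delta> = (\<lambda>j'. if j' = j then \<one> else \<zero>)"
  have "(\<Oplus>j'\<in>{..<m}. \<delta> j' \<otimes> w j' i) = w j i" if "i < n" for i
  proof -
    have "(\<Oplus>j'\<in>{..<m}. \<delta> j' \<otimes> w j' i) = (\<Oplus>j'\<in>{..<m}. if j = j' then w j' i else \<zero>)"
      using assms(2) wc that by (intro finsum_cong') (auto simp: \<delta>_def)
    also have "\<dots> = w j i"
      using assms(2) wc that by (intro add.finprod_singleton) auto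
    finally show ?thesis .
  qed
  then have "w j = (\<lambda>i. if i < n then (\<Oplus>j'\<in>{..<m}. \<delta> j' \<otimes> w j' i) else \<zero>)"
    using rvec_outside[OF assms(1)[OF assms(2)]] by auto
  moreover have "(\<lambda>i. if i < n then (\<Oplus>j'\<in>{..<m}. \<delta> j' \<otimes> w j' i) else \<zero>) \<in> vspan R n m w"
    by (rule vspan_memI) (simp add: \<delta>_def)
  ultimately show ?thesis by simp
qed

lemma vspan_smult:
  fixes m :: nat
  assumes "c \<in> carrier R" "\<And>j. j < m \<Longrightarrow> w j \<in> rvec R n" "v \<in> vspan R n m w"
  shows "(\<lambda>i. c \<otimes> v i) \<in> vspan R n m w"
proof -
  obtain d where d: "\<And>j. j < m \<Longrightarrow> d j \<in> carrier R"
    and v: "v = (\<lambda>i. if i < n then (\<Oplus>j\<in>{..<m}. d j \<otimes> w j i) else \<zero>)"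
    using assms(3) by (elim vspan_memE) blast
  have wc: "\<And>i j. i < n \<Longrightarrow> j < m \<Longrightarrow> w j i \<in> carrier R" using assms(2) rvec_carrier by blast
  have "c \<otimes> (\<Oplus>j\<in>{..<m}. d j \<otimes> w j i) = (\<Oplus>j\<in>{..<m}. (c \<otimes> d j) \<otimes> w j i)" if "i < n" for i
    using assms(1) d wc that by (subst finsum_rdistr) (auto intro!: finsum_cong' simp: m_assoc)
  then have "(\<lambda>i. c \<otimes> v i) = (\<lambda>i. if i < n then (\<Oplus>j\<in>{..<m}. (c \<otimes> d j) \<otimes> w j i) else \<zero>)"
    using assms(1) by (auto simp: v)
  moreover have "(\<lambda>i. if i < n then (\<Oplus>j\<in>{..<m}. (c \<otimes> d j) \<otimes> w j i) else \<zero>) \<in> vspan R n m w"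
    using assms(1) d by (intro vspan_memI) simp
  ultimately show ?thesis by simp
qed

lemma vspan_subset_syzygies:
  fixes m :: nat
  assumes "\<And>j. j < m \<Longrightarrow> w j \<in> syzygies R n a" "\<And>i. i < n \<Longrightarrow> a i \<in> carrier R"
  shows "vspan R n m w \<subseteq> syzygies R n a"
proof
  fix v assume "v \<in> vspan R n m w"
  then obtain c where c: "\<And>j. j < m \<Longrightarrow> c j \<in> carrier R"
    and v: "v = (\<lambda>i. if i < n then (\<Oplus>j\<in>{..<m}. c j \<otimes> w j i) else \<zero>)"
    by (elim vspan_memE) blast
  have w: "\<And>j. j < m \<Longrightarrow> w j \<in> rvec R n" using assms(1) by (simp add: syzygies_def)
  have "lincomb R n v a = (\<Oplus>j\<in>{..<m}. c j \<otimes> lincomb R n (w j) a)"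
    unfolding v using c w assms(2) by (intro lincomb_vspan_elem) auto
  also have "\<dots> = (\<Oplus>j\<in>{..<m}. \<zero>)"
    using c assms(1) by (intro finsum_cong') (auto simp: syzygies_def)
  also have "\<dots> = \<zero>" by simp
  moreover have "v \<in> rvec R n"
    using subsetD[OF vspan_subset_rvec[OF w] \<open>v \<in> vspan R n m w\<close>] .
  ultimately show "v \<in> syzygies R n a" by (simp add: syzygies_def)
qed

lemma lincomb_range_subset_ideal:
  assumes "ideal J R" "\<And>i. i < n \<Longrightarrow> a i \<in> J"
  shows "lincomb_range R n a \<subseteq> J"
proof
  fix x assume "x \<in> lincomb_range R n a"
  then obtain v where "v \<in> rvec R n" "x = (\<Oplus>i\<in>{..<n}. v i \<otimes> a i)"
    by (auto simp: lincomb_range_def lincomb_def)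
  then show "x \<in> J"
    using assms by (auto intro!: finsum_in_ideal ideal.I_l_closed rvec_carrier)
qed

end

lemma (in cring) lincomb_range_ideal:
  assumes a: "\<And>i. i < n \<Longrightarrow> a i \<in> carrier R"
  shows "ideal (lincomb_range R n a) R"
proof -
  have sub: "lincomb_range R n a \<subseteq> carrier R"
    using a by (auto simp: lincomb_range_def rvec_carrier intro: lincomb_closed)
  have smult: "c \<otimes> x \<in> lincomb_range R n a" if "c \<in> carrier R" "x \<in> lincomb_range R n a" for c x
    using that a by (auto simp: lincomb_range_def lincomb_smult rvec_carrier intro!: rvec_smult)
  have add: "x \<oplus> y \<in> lincomb_range R n a" if "x \<in> lincomb_range R n a" "y \<in> lincomb_range R n a" for x y
    using that a by (auto simp: lincomb_range_def lincomb_add rvec_carrier intro!: rvec_add)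
  have "lincomb R n (\<lambda>i. \<zero>) a = (\<Oplus>i\<in>{..<n}. \<zero>)"
    unfolding lincomb_def using a by (intro finsum_cong') auto
  then have zero: "\<zero> \<in> lincomb_range R n a"
    using zero_rvec by (force simp: lincomb_range_def)
  have "\<ominus> x = (\<ominus> \<one>) \<otimes> x" if "x \<in> lincomb_range R n a" for x
    using that sub by (auto simp: l_minus)
  then have neg: "\<ominus> x \<in> lincomb_range R n a" if "x \<in> lincomb_range R n a" for x
    using that smult[of "\<ominus> \<one>" x] by simp
  show ?thesis
  proof (rule idealI[OF ring_axioms])
    show "subgroup (lincomb_range R n a) (add_monoid R)"
      using sub zero add neg by (intro add.subgroupI) (auto simp: a_inv_def[symmetric])
  next
    show "x \<otimes> y \<in> lincomb_range R n a" if "y \<in> lincomb_range R n a" "x \<in> carrier R" for x y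
      using smult that by blast
  next
    show "y \<otimes> x \<in> lincomb_range R n a" if "y \<in> lincomb_range R n a" "x \<in> carrier R" for x y
      using smult[OF that(2,1)] that sub m_comm by auto
  qed
qed

context ring_hom_ring
begin

lemma hom_rvec: "v \<in> rvec R n \<Longrightarrow> (\<lambda>i. h (v i)) \<in> rvec S n"
  by (simp add: rvec_def)

lemma hom_lincomb:
  assumes "\<And>i. i < n \<Longrightarrow> v i \<in> carrier R" "\<And>i. i < n \<Longrightarrow> a i \<in> carrier R"
  shows "h (lincomb R n v a) = lincomb S n (\<lambda>i. h (v i)) (\<lambda>i. h (a i))"
  unfolding lincomb_def using assms
  by (subst hom_finsum) (auto intro!: S.finsum_cong')

lemma hom_vspan:
  assumes "\<And>j. j < m \<Longrightarrow> w j \<in> rvec R n" "v \<in> vspan R n m w"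
  shows "(\<lambda>i. h (v i)) \<in> vspan S n m (\<lambda>j i. h (w j i))"
proof -
  obtain c where c: "\<And>j. j < m \<Longrightarrow> c j \<in> carrier R"
    and v: "v = (\<lambda>i. if i < n then (\<Oplus>j\<in>{..<m}. c j \<otimes> w j i) else \<zero>)"
    using assms(2) by (elim R.vspan_memE) blast
  have wc: "\<And>i j. i < n \<Longrightarrow> j < m \<Longrightarrow> w j i \<in> carrier R"
    using assms(1) R.rvec_carrier by blast
  have "h (\<Oplus>j\<in>{..<m}. c j \<otimes> w j i) = (\<Oplus>\<^bsub>S\<^esub>j\<in>{..<m}. h (c j) \<otimes>\<^bsub>S\<^esub> h (w j i))"
    if "i < n" for i
    using c wc that by (subst hom_finsum) (auto intro!: S.finsum_cong')
  then have "(\<lambda>i. h (v i)) = (\<lambda>i. if i < n then (\<Oplus>\<^bsub>S\<^esub>j\<in>{..<m}. h (c j) \<otimes>\<^bsub>S\<^esub> h (w j i)) else \<zero>\<^bsub>S\<^esub>)"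
    by (auto simp: v)
  moreover have "\<dots> \<in> vspan S n m (\<lambda>j i. h (w j i))"
    using c by (intro S.vspan_memI) simp
  ultimately show ?thesis by simp
qed

end

section \<open>The localization \<open>R_s\<close>\<close>

locale localization_away = cring R for R (structure) +
  fixes s assumes s_closed [simp]: "s \<in> carrier R"
begin

lemma loc_rel_iff:
  assumes "a \<in> carrier R" "b \<in> carrier R"
  shows "loc_rel R s (a, m) (b, n) \<longleftrightarrow> (\<exists>k::nat. s [^] k \<otimes> (a \<otimes> s [^] n) = s [^] k \<otimes> (b \<otimes> s [^] m))"
proof -
  have "s [^] k \<otimes> (a \<otimes> s [^] n \<ominus> b \<otimes> s [^] m) = s [^] k \<otimes> (a \<otimes> s [^] n) \<ominus> s [^] k \<otimes> (b \<otimes> s [^] m)"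
    for k :: nat
    using assms by (simp add: minus_eq r_distr r_minus)
  then show ?thesis unfolding loc_rel_def using assms by simp
qed

lemma loc_rel_sym:
  "a \<in> carrier R \<Longrightarrow> b \<in> carrier R \<Longrightarrow> loc_rel R s (a, m) (b, n) \<Longrightarrow> loc_rel R s (b, n) (a, m)"
  by (metis loc_rel_iff)

lemma loc_rel_trans:
  assumes c: "a \<in> carrier R" "b \<in> carrier R" "c \<in> carrier R"
    and "loc_rel R s (a, m) (b, n)" "loc_rel R s (b, n) (c, p)"
  shows "loc_rel R s (a, m) (c, p)"
proof -
  obtain k l :: nat where k: "s [^] k \<otimes> (a \<otimes> s [^] n) = s [^] k \<otimes> (b \<otimes> s [^] m)"
    and l: "s [^] l \<otimes> (b \<otimes> s [^] p) = s [^] l \<otimes> (c \<otimes> s [^] n)"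
    using assms by (auto simp: loc_rel_iff)
  have "s [^] (k + l + n) \<otimes> (a \<otimes> s [^] p) = (s [^] k \<otimes> (a \<otimes> s [^] n)) \<otimes> (s [^] l \<otimes> s [^] p)"
    using c by (simp add: nat_pow_mult[symmetric] m_ac)
  also have "\<dots> = (s [^] l \<otimes> (b \<otimes> s [^] p)) \<otimes> (s [^] k \<otimes> s [^] m)"
    using c by (simp add: k m_ac)
  also have "\<dots> = s [^] (k + l + n) \<otimes> (c \<otimes> s [^] m)"
    using c by (simp add: l nat_pow_mult[symmetric] m_ac)
  finally show ?thesis using c by (auto simp: loc_rel_iff)
qed

lemma loc_class_self: "a \<in> carrier R \<Longrightarrow> (a, m) \<in> loc_class R s a m"
  by (auto simp: loc_class_def loc_rel_iff)

lemma loc_class_eq: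
  assumes "a \<in> carrier R" "b \<in> carrier R" "loc_rel R s (a, m) (b, n)"
  shows "loc_class R s a m = loc_class R s b n"
proof -
  have "loc_rel R s (a, m) (q1, q2) \<longleftrightarrow> loc_rel R s (b, n) (q1, q2)" if "q1 \<in> carrier R" for q1 q2
    using that assms loc_rel_sym loc_rel_trans by meson
  then show ?thesis unfolding loc_class_def by auto
qed

lemma loc_class_memD: "q \<in> loc_class R s a m \<Longrightarrow> fst q \<in> carrier R \<and> loc_rel R s (a, m) q"
  by (auto simp: loc_class_def)

lemma loc_mult_compat:
  assumes c: "a \<in> carrier R" "b \<in> carrier R" "p1 \<in> carrier R" "q1 \<in> carrier R"
    and "loc_rel R s (a, m) (p1, p2)" "loc_rel R s (b, n) (q1, q2)"
  shows "loc_rel R s (a \<otimes> b, m + n) (p1 \<otimes> q1, p2 + q2)"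
proof -
  obtain k l :: nat where k: "s [^] k \<otimes> (a \<otimes> s [^] p2) = s [^] k \<otimes> (p1 \<otimes> s [^] m)"
    and l: "s [^] l \<otimes> (b \<otimes> s [^] q2) = s [^] l \<otimes> (q1 \<otimes> s [^] n)"
    using assms by (auto simp: loc_rel_iff)
  have "s [^] (k + l) \<otimes> (a \<otimes> b \<otimes> s [^] (p2 + q2))
      = (s [^] k \<otimes> (a \<otimes> s [^] p2)) \<otimes> (s [^] l \<otimes> (b \<otimes> s [^] q2))"
    using c by (simp add: nat_pow_mult[symmetric] m_ac)
  also have "\<dots> = (s [^] k \<otimes> (p1 \<otimes> s [^] m)) \<otimes> (s [^] l \<otimes> (q1 \<otimes> s [^] n))"
    by (simp add: k l)
  also have "\<dots> = s [^] (k + l) \<otimes> (p1 \<otimes> q1 \<otimes> s [^] (m + n))"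
    using c by (simp add: nat_pow_mult[symmetric] m_ac)
  finally show ?thesis using c by (auto simp: loc_rel_iff)
qed

lemma loc_mult_class:
  assumes "a \<in> carrier R" "b \<in> carrier R"
  shows "loc_mult R s (loc_class R s a m) (loc_class R s b n) = loc_class R s (a \<otimes> b) (m + n)"
proof (intro equalityI subsetI)
  fix x assume "x \<in> loc_class R s (a \<otimes> b) (m + n)"
  then show "x \<in> loc_mult R s (loc_class R s a m) (loc_class R s b n)"
    unfolding loc_mult_def using assms
    by (intro CollectI bexI[of _ "(a, m)"] bexI[of _ "(b, n)"]) (auto simp: loc_class_self)
next
  fix x assume "x \<in> loc_mult R s (loc_class R s a m) (loc_class R s b n)"
  then obtain p q where p: "p \<in> loc_class R s a m" and q: "q \<in> loc_class R s b n"
    and x: "x \<in> loc_class R s (fst p \<otimes> fst q) (snd p + snd q)"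
    unfolding loc_mult_def by blast
  have "loc_class R s (fst p \<otimes> fst q) (snd p + snd q) = loc_class R s (a \<otimes> b) (m + n)"
    using loc_class_memD[OF p] loc_class_memD[OF q] assms
      loc_mult_compat[of a b "fst p" "fst q" m "snd p" n "snd q"]
    by (intro loc_class_eq[symmetric]) auto
  with x show "x \<in> loc_class R s (a \<otimes> b) (m + n)" by simp
qed

lemma loc_add_compat:
  assumes c: "a \<in> carrier R" "b \<in> carrier R" "p1 \<in> carrier R" "q1 \<in> carrier R"
    and "loc_rel R s (a, 0) (p1, p2)" "loc_rel R s (b, 0) (q1, q2)"
  shows "loc_rel R s (a \<oplus> b, 0) (p1 \<otimes> s [^] q2 \<oplus> q1 \<otimes> s [^] p2, p2 + q2)"
proof -
  obtain k l :: nat where k: "s [^] k \<otimes> (a \<otimes> s [^] p2) = s [^] k \<otimes> p1"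
    and l: "s [^] l \<otimes> (b \<otimes> s [^] q2) = s [^] l \<otimes> q1"
    using assms by (auto simp: loc_rel_iff)
  have "s [^] (k + l) \<otimes> ((a \<oplus> b) \<otimes> s [^] (p2 + q2))
      = (s [^] k \<otimes> (a \<otimes> s [^] p2)) \<otimes> (s [^] l \<otimes> s [^] q2) \<oplus> (s [^] l \<otimes> (b \<otimes> s [^] q2)) \<otimes> (s [^] k \<otimes> s [^] p2)"
    using c by (simp add: l_distr r_distr nat_pow_mult[symmetric] m_ac)
  also have "\<dots> = (s [^] k \<otimes> p1) \<otimes> (s [^] l \<otimes> s [^] q2) \<oplus> (s [^] l \<otimes> q1) \<otimes> (s [^] k \<otimes> s [^] p2)"
    by (simp add: k l)
  also have "\<dots> = s [^] (k + l) \<otimes> ((p1 \<otimes> s [^] q2 \<oplus> q1 \<otimes> s [^] p2) \<otimes> s [^] (0::nat))"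
    using c by (simp add: l_distr r_distr nat_pow_mult[symmetric] m_ac)
  finally show ?thesis using c by (subst loc_rel_iff) auto
qed

lemma loc_add_class:
  assumes "a \<in> carrier R" "b \<in> carrier R"
  shows "loc_add R s (loc_class R s a 0) (loc_class R s b 0) = loc_class R s (a \<oplus> b) 0"
proof (intro equalityI subsetI)
  fix x assume "x \<in> loc_class R s (a \<oplus> b) 0"
  then show "x \<in> loc_add R s (loc_class R s a 0) (loc_class R s b 0)"
    unfolding loc_add_def using assms
    by (intro CollectI bexI[of _ "(a, 0)"] bexI[of _ "(b, 0)"]) (auto simp: loc_class_self)
next
  fix x assume "x \<in> loc_add R s (loc_class R s a 0) (loc_class R s b 0)"
  then obtain p q where p: "p \<in> loc_class R s a 0" and q: "q \<in> loc_class R s b 0"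
    and x: "x \<in> loc_class R s (fst p \<otimes> s [^] snd q \<oplus> fst q \<otimes> s [^] snd p) (snd p + snd q)"
    unfolding loc_add_def by blast
  have "loc_class R s (fst p \<otimes> s [^] snd q \<oplus> fst q \<otimes> s [^] snd p) (snd p + snd q)
      = loc_class R s (a \<oplus> b) 0"
    using loc_class_memD[OF p] loc_class_memD[OF q] assms
      loc_add_compat[of a b "fst p" "fst q" "snd p" "snd q"]
    by (intro loc_class_eq[symmetric]) auto
  with x show "x \<in> loc_class R s (a \<oplus> b) 0" by simp
qed

lemma loc_class_eq_zero:
  assumes "a \<in> carrier R" "loc_class R s a 0 = loc_class R s \<zero> 0"
  shows "\<exists>t::nat. s [^] t \<otimes> a = \<zero>"
proof -
  have "(a, 0) \<in> loc_class R s \<zero> 0" using assms loc_class_self[of a 0] by simp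
  then have "loc_rel R s (\<zero>, 0) (a, 0)" by (auto simp: loc_class_def)
  then show ?thesis using assms by (auto simp: loc_rel_iff)
qed

end

text \<open>\<open>localization R s\<close> is a ring for every \<open>s\<close>; we assume it, since coherence of \<open>R_s\<close>
  only speaks about its ideals and the existence of one already makes it a ring.\<close>

locale localization_away_ring = localization_away +
  assumes ring_localization: "ring (localization R s)"
begin

abbreviation Rs where "Rs \<equiv> localization R s"

definition to_loc :: "'a \<Rightarrow> ('a \<times> nat) set" where
  "to_loc a = loc_class R s a 0"

definition s_inv :: "('a \<times> nat) set" where
  "s_inv = loc_class R s \<one> 1"

lemma localization_simps:
  "carrier Rs = loc_carrier R s" "(\<otimes>\<^bsub>Rs\<^esub>) = loc_mult R s" "(\<oplus>\<^bsub>Rs\<^esub>) = loc_add R s"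
  "\<one>\<^bsub>Rs\<^esub> = loc_class R s \<one> 0" "\<zero>\<^bsub>Rs\<^esub> = loc_class R s \<zero> 0"
  by (simp_all add: localization_def)

lemma loc_class_closed: "a \<in> carrier R \<Longrightarrow> loc_class R s a m \<in> carrier Rs"
  by (auto simp: localization_simps loc_carrier_def)

lemma loc_class_mult_localization:
  "a \<in> carrier R \<Longrightarrow> b \<in> carrier R \<Longrightarrow>
    loc_class R s a m \<otimes>\<^bsub>Rs\<^esub> loc_class R s b n = loc_class R s (a \<otimes> b) (m + n)"
  by (simp add: localization_simps loc_mult_class)

lemma cring_localization: "cring Rs"
proof -
  interpret Rs: ring Rs by (rule ring_localization)
  have "x \<otimes>\<^bsub>Rs\<^esub> y = y \<otimes>\<^bsub>Rs\<^esub> x" if "x \<in> carrier Rs" "y \<in> carrier Rs" for x y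
    using that by (auto simp: localization_simps loc_carrier_def loc_mult_class m_comm add.commute)
  then show ?thesis unfolding cring_def comm_monoid_def comm_monoid_axioms_def
    using ring_localization Rs.is_monoid by blast
qed

sublocale Rs: cring Rs by (rule cring_localization)

lemma s_inv_closed [simp]: "s_inv \<in> carrier Rs"
  by (simp add: s_inv_def loc_class_closed)

lemma to_loc_ring_hom: "to_loc \<in> ring_hom R Rs"
proof (rule ring_hom_memI)
  show "to_loc (x \<otimes> y) = to_loc x \<otimes>\<^bsub>Rs\<^esub> to_loc y" if "x \<in> carrier R" "y \<in> carrier R" for x y
    using that by (simp add: to_loc_def loc_class_mult_localization)
  show "to_loc (x \<oplus> y) = to_loc x \<oplus>\<^bsub>Rs\<^esub> to_loc y" if "x \<in> carrier R" "y \<in> carrier R" for x y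
    using that by (simp add: to_loc_def localization_simps loc_add_class)
  show "to_loc \<one> = \<one>\<^bsub>Rs\<^esub>" by (simp add: to_loc_def localization_simps)
qed (simp add: to_loc_def loc_class_closed)

sublocale to_loc: ring_hom_ring R Rs to_loc
  by (rule ring_hom_ringI2[OF ring_axioms ring_localization to_loc_ring_hom])

lemma s_inv_pow: "s_inv [^]\<^bsub>Rs\<^esub> m = loc_class R s \<one> m"
  by (induction m) (simp_all add: localization_simps s_inv_def loc_mult_class)

lemma loc_class_eq_fraction: "a \<in> carrier R \<Longrightarrow> loc_class R s a m = to_loc a \<otimes>\<^bsub>Rs\<^esub> s_inv [^]\<^bsub>Rs\<^esub> m"
  by (simp add: s_inv_pow to_loc_def loc_class_mult_localization)

lemma to_loc_s_inv_pow: "to_loc (s [^] (k::nat)) \<otimes>\<^bsub>Rs\<^esub> s_inv [^]\<^bsub>Rs\<^esub> k = \<one>\<^bsub>Rs\<^esub>"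
proof -
  have "to_loc (s [^] k) \<otimes>\<^bsub>Rs\<^esub> s_inv [^]\<^bsub>Rs\<^esub> k = loc_class R s (s [^] k) k"
    by (simp add: loc_class_eq_fraction)
  also have "\<dots> = loc_class R s \<one> 0"
  proof (rule loc_class_eq)
    show "loc_rel R s (s [^] k, k) (\<one>, 0)"
      by (subst loc_rel_iff) (auto intro: exI[of _ 0])
  qed simp_all
  finally show ?thesis by (simp add: localization_simps)
qed

lemma localization_elem:
  assumes "x \<in> carrier Rs"
  obtains a and m :: nat where "a \<in> carrier R" "x = to_loc a \<otimes>\<^bsub>Rs\<^esub> s_inv [^]\<^bsub>Rs\<^esub> m"
proof -
  obtain a m where a: "a \<in> carrier R" and x: "x = loc_class R s a m"
    using assms by (auto simp: localization_simps loc_carrier_def)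
  show ?thesis using x by (intro that[of a m, OF a]) (simp add: a loc_class_eq_fraction)
qed

lemma to_loc_eq_zero: "a \<in> carrier R \<Longrightarrow> to_loc a = \<zero>\<^bsub>Rs\<^esub> \<Longrightarrow> \<exists>t::nat. s [^] t \<otimes> a = \<zero>"
  by (rule loc_class_eq_zero) (auto simp: to_loc_def localization_simps)

end

section \<open>Finite presentations over the localization\<close>

context localization_away_ring
begin

lemma s_inv_pow_to_loc:
  "a \<in> carrier R \<Longrightarrow> s_inv [^]\<^bsub>Rs\<^esub> (k::nat) \<otimes>\<^bsub>Rs\<^esub> to_loc (s [^] k \<otimes> a) = to_loc a"
  using to_loc_s_inv_pow[of k] by (simp add: Rs.m_ac)

lemma genideal_localization_numerators:
  assumes "finite A" "A \<subseteq> carrier Rs"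
  obtains N where "finite N" "N \<subseteq> carrier R" "Idl\<^bsub>Rs\<^esub> A = Idl\<^bsub>Rs\<^esub> (to_loc ` N)"
proof -
  have "\<forall>x\<in>A. \<exists>a (d::nat). a \<in> carrier R \<and> x = to_loc a \<otimes>\<^bsub>Rs\<^esub> s_inv [^]\<^bsub>Rs\<^esub> d"
    using assms(2) localization_elem by (metis subsetD)
  then obtain num and den :: "_ \<Rightarrow> nat"
    where num: "\<And>x. x \<in> A \<Longrightarrow> num x \<in> carrier R"
      and frac: "\<And>x. x \<in> A \<Longrightarrow> x = to_loc (num x) \<otimes>\<^bsub>Rs\<^esub> s_inv [^]\<^bsub>Rs\<^esub> den x"
    by metis
  define N where "N = num ` A"
  have N: "N \<subseteq> carrier R" using num by (auto simp: N_def)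
  then have N_loc: "to_loc ` N \<subseteq> carrier Rs" by auto
  have "Idl\<^bsub>Rs\<^esub> A \<subseteq> Idl\<^bsub>Rs\<^esub> (to_loc ` N)"
  proof (rule Rs.genideal_minimal[OF Rs.genideal_ideal])
    show "A \<subseteq> Idl\<^bsub>Rs\<^esub> (to_loc ` N)"
    proof
      fix x assume x: "x \<in> A"
      have "to_loc (num x) \<in> Idl\<^bsub>Rs\<^esub> (to_loc ` N)"
        using x Rs.genideal_self[OF N_loc] by (auto simp: N_def)
      then show "x \<in> Idl\<^bsub>Rs\<^esub> (to_loc ` N)"
        by (subst frac[OF x]) (auto intro: ideal.I_r_closed Rs.genideal_ideal[OF N_loc])
    qed
  qed (rule N_loc)
  moreover have "Idl\<^bsub>Rs\<^esub> (to_loc ` N) \<subseteq> Idl\<^bsub>Rs\<^esub> A"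
  proof (rule Rs.genideal_minimal[OF Rs.genideal_ideal[OF assms(2)]])
    show "to_loc ` N \<subseteq> Idl\<^bsub>Rs\<^esub> A"
    proof
      fix y assume "y \<in> to_loc ` N"
      then obtain x where x: "x \<in> A" and y: "y = to_loc (num x)" by (auto simp: N_def)
      have "x \<otimes>\<^bsub>Rs\<^esub> to_loc (s [^] den x) = to_loc (num x)"
        using num[OF x] to_loc_s_inv_pow[of "den x"] by (subst frac[OF x]) (simp add: Rs.m_ac)
      moreover have "x \<otimes>\<^bsub>Rs\<^esub> to_loc (s [^] den x) \<in> Idl\<^bsub>Rs\<^esub> A"
        using x assms(2) Rs.genideal_self[OF assms(2)]
        by (intro ideal.I_r_closed Rs.genideal_ideal) auto
      ultimately show "y \<in> Idl\<^bsub>Rs\<^esub> A" by (simp add: y)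
    qed
  qed
  ultimately show ?thesis using that[of N] N assms(1) by (simp add: N_def)
qed

lemma to_loc_genideal:
  assumes "N \<subseteq> carrier R" "a \<in> Idl N"
  shows "to_loc a \<in> Idl\<^bsub>Rs\<^esub> (to_loc ` N)"
proof -
  have N_loc: "to_loc ` N \<subseteq> carrier Rs" using assms(1) by auto
  have "Idl N \<subseteq> {r \<in> carrier R. to_loc r \<in> Idl\<^bsub>Rs\<^esub> (to_loc ` N)}"
    using assms(1) Rs.genideal_self[OF N_loc]
    by (intro genideal_minimal to_loc.ideal_vimage Rs.genideal_ideal N_loc) auto
  then show ?thesis using assms(2) by blast
qed

lemma genideal_localization_eq_lincomb_range:
  assumes N: "N \<subseteq> carrier R" and b: "\<And>i. i < n \<Longrightarrow> b i \<in> Idl N"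
    and surj: "\<And>x. x \<in> Idl N \<Longrightarrow> s \<otimes> x \<in> lincomb_range R n b"
  shows "Idl\<^bsub>Rs\<^esub> (to_loc ` N) = lincomb_range Rs n (\<lambda>i. to_loc (b i))"
proof
  have bc: "\<And>i. i < n \<Longrightarrow> b i \<in> carrier R"
    by (rule ideal.Icarr[OF genideal_ideal[OF N] b])
  show "lincomb_range Rs n (\<lambda>i. to_loc (b i)) \<subseteq> Idl\<^bsub>Rs\<^esub> (to_loc ` N)"
    using N b by (intro Rs.lincomb_range_subset_ideal Rs.genideal_ideal to_loc_genideal) auto
  show "Idl\<^bsub>Rs\<^esub> (to_loc ` N) \<subseteq> lincomb_range Rs n (\<lambda>i. to_loc (b i))"
  proof (rule Rs.genideal_minimal[OF Rs.lincomb_range_ideal])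
    show "to_loc ` N \<subseteq> lincomb_range Rs n (\<lambda>i. to_loc (b i))"
    proof
      fix y assume "y \<in> to_loc ` N"
      then obtain a where a: "a \<in> N" and y: "y = to_loc a" by blast
      have ac: "a \<in> carrier R" using a N by blast
      obtain u where u: "u \<in> rvec R n" and su: "s \<otimes> a = lincomb R n u b"
        using surj genideal_self[OF N] a by (auto simp: lincomb_range_def)
      have uc: "\<And>i. i < n \<Longrightarrow> u i \<in> carrier R" using u rvec_carrier by blast
      have "y = s_inv \<otimes>\<^bsub>Rs\<^esub> to_loc (lincomb R n u b)"
        using s_inv_pow_to_loc[OF ac, of 1] by (simp add: y su[symmetric])
      also have "\<dots> = s_inv \<otimes>\<^bsub>Rs\<^esub> lincomb Rs n (\<lambda>i. to_loc (u i)) (\<lambda>i. to_loc (b i))"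
        using uc bc by (simp add: to_loc.hom_lincomb)
      also have "\<dots> = lincomb Rs n (\<lambda>i. s_inv \<otimes>\<^bsub>Rs\<^esub> to_loc (u i)) (\<lambda>i. to_loc (b i))"
        using uc bc by (intro Rs.lincomb_smult) auto
      finally have "y = lincomb Rs n (\<lambda>i. s_inv \<otimes>\<^bsub>Rs\<^esub> to_loc (u i)) (\<lambda>i. to_loc (b i))" .
      moreover have "(\<lambda>i. s_inv \<otimes>\<^bsub>Rs\<^esub> to_loc (u i)) \<in> rvec Rs n"
        using u by (intro Rs.rvec_smult to_loc.hom_rvec s_inv_closed)
      ultimately show "y \<in> lincomb_range Rs n (\<lambda>i. to_loc (b i))"
        unfolding lincomb_range_def by blast
    qed
  qed (use bc in auto)
qed

lemma rvec_common_denominator: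
  assumes "v \<in> rvec Rs n"
  obtains u and K :: nat where "u \<in> rvec R n" "v = (\<lambda>i. s_inv [^]\<^bsub>Rs\<^esub> K \<otimes>\<^bsub>Rs\<^esub> to_loc (u i))"
proof -
  have "\<forall>i\<in>{..<n}. \<exists>a (k::nat). a \<in> carrier R \<and> v i = to_loc a \<otimes>\<^bsub>Rs\<^esub> s_inv [^]\<^bsub>Rs\<^esub> k"
    using assms localization_elem by (metis lessThan_iff Rs.rvec_carrier)
  then obtain a and k :: "nat \<Rightarrow> nat"
    where a: "\<And>i. i < n \<Longrightarrow> a i \<in> carrier R"
      and frac: "\<And>i. i < n \<Longrightarrow> v i = to_loc (a i) \<otimes>\<^bsub>Rs\<^esub> s_inv [^]\<^bsub>Rs\<^esub> k i"
    by (metis lessThan_iff)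
  define K where "K = (\<Sum>i<n. k i)"
  define u where "u = (\<lambda>i. if i < n then s [^] (K - k i) \<otimes> a i else \<zero>)"
  have "v i = s_inv [^]\<^bsub>Rs\<^esub> K \<otimes>\<^bsub>Rs\<^esub> to_loc (u i)" for i
  proof (cases "i < n")
    case True
    have "k i \<le> K" unfolding K_def using True by (intro member_le_sum) auto
    then have "s_inv [^]\<^bsub>Rs\<^esub> K = s_inv [^]\<^bsub>Rs\<^esub> k i \<otimes>\<^bsub>Rs\<^esub> s_inv [^]\<^bsub>Rs\<^esub> (K - k i)"
      by (simp add: Rs.nat_pow_mult)
    then show ?thesis
      using True a s_inv_pow_to_loc[of "a i" "K - k i"]
      by (simp add: frac u_def Rs.m_ac)
  next
    case False
    then show ?thesis using assms by (simp add: u_def Rs.rvec_outside)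
  qed
  moreover have "u \<in> rvec R n" using a by (simp add: u_def rvec_def)
  ultimately show ?thesis using that by blast
qed

lemma syzygies_localization:
  assumes b: "\<And>i. i < n \<Longrightarrow> b i \<in> carrier R" and w: "\<And>j. j < m \<Longrightarrow> w j \<in> rvec R n"
    and span: "vspan R n m w \<subseteq> syzygies R n b"
    and ker: "\<And>v. v \<in> syzygies R n b \<Longrightarrow> (\<lambda>i. s \<otimes> v i) \<in> vspan R n m w"
  shows "syzygies Rs n (\<lambda>i. to_loc (b i)) = vspan Rs n m (\<lambda>j i. to_loc (w j i))"
proof
  have "(\<lambda>i. to_loc (w j i)) \<in> syzygies Rs n (\<lambda>i. to_loc (b i))" if j: "j < m" for j
  proof -
    have "w j \<in> vspan R n m w" using w j by (rule vspan_generator)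
    then have wj: "w j \<in> syzygies R n b" using span by blast
    then have "lincomb Rs n (\<lambda>i. to_loc (w j i)) (\<lambda>i. to_loc (b i)) = to_loc (lincomb R n (w j) b)"
      using b by (intro to_loc.hom_lincomb[symmetric]) (auto simp: syzygies_def rvec_carrier)
    with wj show ?thesis by (simp add: syzygies_def to_loc.hom_rvec)
  qed
  then show "vspan Rs n m (\<lambda>j i. to_loc (w j i)) \<subseteq> syzygies Rs n (\<lambda>i. to_loc (b i))"
    using b by (intro Rs.vspan_subset_syzygies) auto
next
  show "syzygies Rs n (\<lambda>i. to_loc (b i)) \<subseteq> vspan Rs n m (\<lambda>j i. to_loc (w j i))"
  proof
    fix v assume v: "v \<in> syzygies Rs n (\<lambda>i. to_loc (b i))"
    then obtain u and K :: nat where u: "u \<in> rvec R n"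
      and vu: "v = (\<lambda>i. s_inv [^]\<^bsub>Rs\<^esub> K \<otimes>\<^bsub>Rs\<^esub> to_loc (u i))"
      by (auto simp: syzygies_def elim: rvec_common_denominator)
    have uc: "u i \<in> carrier R" for i
      using u by (cases "i < n") (simp_all add: rvec_carrier rvec_outside)
    have lc: "lincomb R n u b \<in> carrier R" using uc b by (rule lincomb_closed)
    have "lincomb Rs n v (\<lambda>i. to_loc (b i)) = s_inv [^]\<^bsub>Rs\<^esub> K \<otimes>\<^bsub>Rs\<^esub> to_loc (lincomb R n u b)"
      using uc b by (simp add: vu to_loc.hom_lincomb Rs.lincomb_smult)
    then have "to_loc (lincomb R n u b) = to_loc (s [^] K) \<otimes>\<^bsub>Rs\<^esub> lincomb Rs n v (\<lambda>i. to_loc (b i))"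
      using to_loc_s_inv_pow[of K] lc by (simp add: Rs.m_assoc[symmetric])
    also have "\<dots> = \<zero>\<^bsub>Rs\<^esub>" using v by (simp add: syzygies_def)
    finally have "to_loc (lincomb R n u b) = \<zero>\<^bsub>Rs\<^esub>" .
    then obtain t :: nat where t: "s [^] t \<otimes> lincomb R n u b = \<zero>"
      using to_loc_eq_zero lc by blast
    have "(\<lambda>i. s [^] t \<otimes> u i) \<in> syzygies R n b"
      using u uc b t by (simp add: syzygies_def rvec_smult lincomb_smult)
    then have "(\<lambda>i. to_loc (s \<otimes> (s [^] t \<otimes> u i))) \<in> vspan Rs n m (\<lambda>j i. to_loc (w j i))"
      using ker w by (intro to_loc.hom_vspan)
    then have "(\<lambda>i. s_inv [^]\<^bsub>Rs\<^esub> K \<otimes>\<^bsub>Rs\<^esub> (s_inv [^]\<^bsub>Rs\<^esub> Suc t \<otimes>\<^bsub>Rs\<^esub> to_loc (s \<otimes> (s [^] t \<otimes> u i))))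
        \<in> vspan Rs n m (\<lambda>j i. to_loc (w j i))"
      using w by (intro Rs.vspan_smult Rs.vspan_smult to_loc.hom_rvec) auto
    moreover have "s_inv [^]\<^bsub>Rs\<^esub> Suc t \<otimes>\<^bsub>Rs\<^esub> to_loc (s \<otimes> (s [^] t \<otimes> u i)) = to_loc (u i)" for i
      using s_inv_pow_to_loc[OF uc, of "Suc t" i] uc[of i] by (simp add: m_ac)
    ultimately show "v \<in> vspan Rs n m (\<lambda>j i. to_loc (w j i))" by (simp add: vu)
  qed
qed

lemma fin_pres_ideal_localization:
  assumes u_S: "\<And>I. ideal I R \<Longrightarrow> fin_gen_ideal R I \<Longrightarrow> u_S_fin_pres_ideal_wrt R s I"
    and J: "fin_gen_ideal Rs J"
  shows "fin_pres_ideal Rs J"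
proof -
  obtain A where "finite A" "A \<subseteq> carrier Rs" "J = Idl\<^bsub>Rs\<^esub> A"
    using J by (auto simp: fin_gen_ideal_def)
  then obtain N where N: "finite N" "N \<subseteq> carrier R" and JN: "J = Idl\<^bsub>Rs\<^esub> (to_loc ` N)"
    by (metis genideal_localization_numerators)
  have I: "ideal (Idl N) R" "fin_gen_ideal R (Idl N)"
    using N by (auto simp: genideal_ideal fin_gen_ideal_def)
  obtain n b m w where b: "\<forall>i<n. b i \<in> Idl N" and w: "\<forall>j<m. w j \<in> rvec R n"
    and span: "\<forall>v\<in>vspan R n m w. lincomb R n v b = \<zero>"
    and ker: "\<forall>v\<in>rvec R n. lincomb R n v b = \<zero> \<longrightarrow> (\<lambda>i. s \<otimes> v i) \<in> vspan R n m w"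
    and surj: "\<forall>x\<in>Idl N. s \<otimes> x \<in> lincomb_range R n b"
    using u_S[OF I] unfolding u_S_fin_pres_ideal_wrt_def lincomb_range_def by blast
  have bc: "\<forall>i<n. b i \<in> carrier R" using b ideal.Icarr[OF genideal_ideal[OF N(2)]] by blast
  have "J = lincomb_range Rs n (\<lambda>i. to_loc (b i))"
    unfolding JN using N(2) b surj by (intro genideal_localization_eq_lincomb_range) auto
  moreover have "syzygies Rs n (\<lambda>i. to_loc (b i)) = vspan Rs n m (\<lambda>j i. to_loc (w j i))"
    using bc w span ker vspan_subset_rvec[of m w n]
    by (intro syzygies_localization) (auto simp: syzygies_def)
  ultimately show ?thesis
    using bc w unfolding fin_pres_ideal_def lincomb_range_def syzygies_def
    by (intro exI[of _ n] exI[of _ "\<lambda>i. to_loc (b i)"] conjI exI[of _ m]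
        exI[of _ "\<lambda>j i. to_loc (w j i)"]) (auto intro: to_loc.hom_rvec)
qed

end

theorem proposition3p14:
  fixes R :: "('a, 'b) ring_scheme" and S :: "'a set" and s :: 'a
  assumes "cring R" and "mult_subset R S" and "s \<in> S"
    and "u_S_coherent_wrt R s"
  shows "coherent_ring (localization R s)"
  unfolding coherent_ring_def
proof (intro allI impI, elim conjE)
  fix J assume J: "ideal J (localization R s)" "fin_gen_ideal (localization R s) J"
  have "s \<in> carrier R" using assms(2,3) by (auto simp: mult_subset_def)
  then interpret localization_away_ring R s
    using assms(1) ideal.axioms(2)[OF J(1)]
    by (intro localization_away_ring.intro localization_away.intro localization_away_axioms.intro
        localization_away_ring_axioms.intro)
  show "fin_pres_ideal (localization R s) J"
    using assms(4) J(2) by (intro fin_pres_ideal_localization) (auto simp: u_S_coherent_wrt_def)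
qed

end
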